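(* In the Schwarzschild spacetime with line element $$ds^2=-\left(1-\frac{2m}{r}\right)dt^2+\left(1-\frac{2m}{r}\right)^{-1}dr^2+r^2\left(d\theta^2+\sin^2\theta\, d\varphi^2\right)$$ ($m>0$, $r>2m$, $0<\theta<\pi$), consider a test particle on an equatorial circular geodesic orbit of radius $r_1>3m$, with 4-velocity $$U'=\left(\sqrt{\frac{r_1}{r_1-3m}},\,0,\,0,\,\frac{1}{r_1}\sqrt{\frac{m}{r_1-3m}}\right)$$ in coordinates $(t,r,\theta,\varphi)$. Let $\beta$ be any stationary observer (constant $r,\theta,\varphi$) with 4-velocity field $U=\left(1-\frac{2m}{r}\right)^{-1/2}\frac{\partial}{\partial t}$. For any event $p$ of $\beta$ and any event $q$ of the test particle joined to $p$ by a spacelike geodesic segment orthogonal to $U_p$ at $p$, the kinematic relative velocity $v_{\mathrm{kin}}$ of $U'_q$ with respect to $U_p$ satisfies $$\|v_{\mathrm{kin}}\|^2=\frac{m}{r_1-2m};$$ in particular, it is constant along $\beta$ and independent of the chosen stationary observer.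
   Context: Signature $(-,+,+,+)$, $c=1$; for spacelike $x$, $\|x\|=g(x,x)^{1/2}$. Given an observer $u$ (future-pointing unit timelike vector) at $p$, a test particle with 4-velocity $u'$ at $q$, and a spacelike geodesic segment $\psi$ from $p$ to $q$ orthogonal to $u$ at $p$, let $\tau_{qp}$ be parallel transport from $q$ to $p$ along $\psi$. The kinematic relative velocity of $u'$ with respect to $u$ is $v_{\mathrm{kin}}=\frac{1}{-g(\tau_{qp}u',u)}\tau_{qp}u'-u$. *)

theory Defs
  imports "HOL-Analysis.Analysis"
begin

text \<open>Events of the Schwarzschild exterior are represented in the global
Cartesian chart (t, x, y, z), indices 0,1,2,3 of type 4, with spatial radius
r = |(x,y,z)| > 2m.  In this chart the Schwarzschild line element reads
 ds^2 = -(1 - 2m/r) dt^2 + dx.dx + 2m/(r - 2m) (x.dx)^2 / r^2 ,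
which is the pull-back of the paper's line element under the usual
spherical-to-Cartesian map sph below.\<close>

definition srad :: "real^4 \<Rightarrow> real" where
  "srad p = sqrt ((p$1)^2 + (p$2)^2 + (p$3)^2)"

definition schw_exterior :: "real \<Rightarrow> (real^4) set" where
  "schw_exterior m = {p. srad p > 2*m}"

definition schw_metric :: "real \<Rightarrow> real^4 \<Rightarrow> real^4^4" where
  "schw_metric m p = (\<chi> a b.
     if a = 0 \<and> b = 0 then - (1 - 2*m / srad p)
     else if a = 0 \<or> b = 0 then 0
     else (if a = b then 1 else 0) + 2*m / (srad p - 2*m) * (p$a * p$b) / (srad p)^2)"

definition sg :: "real \<Rightarrow> real^4 \<Rightarrow> real^4 \<Rightarrow> real^4 \<Rightarrow> real" where
  "sg m p v w = v \<bullet> (schw_metric m p *v w)"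

definition pdiff :: "(real^4 \<Rightarrow> real) \<Rightarrow> 4 \<Rightarrow> real^4 \<Rightarrow> real" where
  "pdiff f b p = deriv (\<lambda>s. f (p + s *\<^sub>R axis b 1)) 0"

definition christoffel :: "real \<Rightarrow> real^4 \<Rightarrow> 4 \<Rightarrow> 4 \<Rightarrow> 4 \<Rightarrow> real" where
  "christoffel m p a b c = (1/2) * (\<Sum>d\<in>UNIV. matrix_inv (schw_metric m p) $ a $ d *
      (pdiff (\<lambda>x. schw_metric m x $ d $ c) b p + pdiff (\<lambda>x. schw_metric m x $ d $ b) c p
       - pdiff (\<lambda>x. schw_metric m x $ b $ c) d p))"

definition geodesic_segment :: "real \<Rightarrow> (real \<Rightarrow> real^4) \<Rightarrow> bool" where
  "geodesic_segment m \<gamma> \<longleftrightarrow> (\<forall>s\<in>{0..1}. \<gamma> s \<in> schw_exterior m) \<and>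
     (\<exists>\<gamma>' \<gamma>''. \<forall>s\<in>{0..1}. (\<gamma> has_vector_derivative \<gamma>' s) (at s within {0..1}) \<and>
        (\<gamma>' has_vector_derivative \<gamma>'' s) (at s within {0..1}) \<and>
        (\<forall>a. \<gamma>'' s $ a + (\<Sum>b\<in>UNIV. \<Sum>c\<in>UNIV. christoffel m (\<gamma> s) a b c * \<gamma>' s $ b * \<gamma>' s $ c) = 0))"

definition parallel_along :: "real \<Rightarrow> (real \<Rightarrow> real^4) \<Rightarrow> (real \<Rightarrow> real^4) \<Rightarrow> bool" where
  "parallel_along m \<gamma> V \<longleftrightarrow> (\<exists>V'. \<forall>s\<in>{0..1}. (V has_vector_derivative V' s) (at s within {0..1}) \<and>
        (\<forall>a. V' s $ a + (\<Sum>b\<in>UNIV. \<Sum>c\<in>UNIV. christoffel m (\<gamma> s) a b c *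
              vector_derivative \<gamma> (at s within {0..1}) $ b * V s $ c) = 0))"

definition sph :: "real^4 \<Rightarrow> real^4" where
  "sph y = (\<chi> i. if i = 0 then y$0
                 else if i = 1 then y$1 * sin (y$2) * cos (y$3)
                 else if i = 2 then y$1 * sin (y$2) * sin (y$3)
                 else y$1 * cos (y$2))"

definition vec4 :: "real \<Rightarrow> real \<Rightarrow> real \<Rightarrow> real \<Rightarrow> real^4" where
  "vec4 a b c d = (\<chi> i. if i = 0 then a else if i = 1 then b else if i = 2 then c else d)"

definition sph_push :: "real^4 \<Rightarrow> real^4 \<Rightarrow> real^4" where
  "sph_push y v = vector_derivative (\<lambda>s. sph (y + s *\<^sub>R v)) (at 0)"

definition obs_event :: "real \<Rightarrow> real \<Rightarrow> real \<Rightarrow> real \<Rightarrow> real^4" where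
  "obs_event t0 r0 th0 ph0 = sph (vec4 t0 r0 th0 ph0)"

definition obs_vel :: "real \<Rightarrow> real \<Rightarrow> real \<Rightarrow> real \<Rightarrow> real \<Rightarrow> real^4" where
  "obs_vel m t0 r0 th0 ph0 = sph_push (vec4 t0 r0 th0 ph0)
      (vec4 (1 / sqrt (1 - 2*m/r0)) 0 0 0)"

definition orb_ut :: "real \<Rightarrow> real \<Rightarrow> real" where
  "orb_ut m r1 = sqrt (r1 / (r1 - 3*m))"

definition orb_uphi :: "real \<Rightarrow> real \<Rightarrow> real" where
  "orb_uphi m r1 = (1 / r1) * sqrt (m / (r1 - 3*m))"

text \<open>Event of the particle at coordinate time t1; ph1 is the phase at t = 0.\<close>
definition orb_event :: "real \<Rightarrow> real \<Rightarrow> real \<Rightarrow> real \<Rightarrow> real^4" where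
  "orb_event m r1 ph1 t1 =
     sph (vec4 t1 r1 (pi/2) (ph1 + orb_uphi m r1 / orb_ut m r1 * t1))"

definition orb_vel :: "real \<Rightarrow> real \<Rightarrow> real \<Rightarrow> real \<Rightarrow> real^4" where
  "orb_vel m r1 ph1 t1 =
     sph_push (vec4 t1 r1 (pi/2) (ph1 + orb_uphi m r1 / orb_ut m r1 * t1))
       (vec4 (orb_ut m r1) 0 0 (orb_uphi m r1))"

text \<open>Kinematic relative velocity of (the transported) u' with respect to u, at p.\<close>
definition vkin :: "real \<Rightarrow> real^4 \<Rightarrow> real^4 \<Rightarrow> real^4 \<Rightarrow> real^4" where
  "vkin m p u tu' = (1 / (- sg m p tu' u)) *\<^sub>R tu' - u"

end

theory Submission
  imports Defs
begin

text \<open>The transported velocity \<open>V = \<tau>\<^sub>q\<^sub>p U'\<close> is pinned down by two conservation laws along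
  the connecting geodesic \<open>\<psi>\<close>, without solving for \<open>\<psi>\<close>. Parallel transport preserves
  \<open>g(V, V) = -1\<close>. Since \<open>\<partial>\<^sub>t\<close> is a Killing field, \<open>g(\<psi>', \<partial>\<^sub>t)\<close> is constant along \<open>\<psi>\<close>; it
  vanishes at \<open>p\<close> by orthogonality, so \<open>\<psi>\<close> has no \<open>t\<close>-velocity, and then \<open>(V\<^sup>t)\<^sup>2 g\<^sub>t\<^sub>t\<close> is
  constant along \<open>\<psi>\<close> as well. At \<open>q\<close> it equals \<open>-(1 - 2m/r\<^sub>1) (u\<^sup>t)\<^sup>2 = -(r\<^sub>1 - 2m)/(r\<^sub>1 - 3m)\<close>,
  so the Lorentz factor \<open>\<gamma> = -g(V, U)\<close> at \<open>p\<close> satisfies \<open>\<gamma>\<^sup>2 = (r\<^sub>1 - 2m)/(r\<^sub>1 - 3m)\<close> whatever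
  the observer, and \<open>\<parallel>v\<^sub>k\<^sub>i\<^sub>n\<parallel>\<^sup>2 = 1 - 1/\<gamma>\<^sup>2 = m/(r\<^sub>1 - 2m)\<close>.\<close>

lemma exhaust_4_0: "(x :: 4) = 0 \<or> x = 1 \<or> x = 2 \<or> x = 3"
proof -
  have "x = 1 \<or> x = 2 \<or> x = 3 \<or> x = 4"
    by (rule exhaust_4)
  moreover have "(4 :: 4) = 0"
    by simp
  ultimately show ?thesis
    by argo
qed

lemma UNIV_4: "(UNIV :: 4 set) = {0, 1, 2, 3}"
  using exhaust_4_0 by blast

lemma sum_UNIV_4: "sum f (UNIV :: 4 set) = f 0 + f 1 + f 2 + f 3"
  unfolding UNIV_4 by (simp add: add.assoc)

lemma all_4: "(\<forall>i :: 4. P i) \<longleftrightarrow> P 0 \<and> P 1 \<and> P 2 \<and> P 3"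
  using exhaust_4_0 by metis

lemma vec4_nth [simp]:
  "vec4 a b c d $ 0 = a" "vec4 a b c d $ 1 = b" "vec4 a b c d $ 2 = c" "vec4 a b c d $ 3 = d"
  unfolding vec4_def by simp_all

lemma sph_nth [simp]:
  "sph y $ 0 = y $ 0" "sph y $ 1 = y $ 1 * sin (y $ 2) * cos (y $ 3)"
  "sph y $ 2 = y $ 1 * sin (y $ 2) * sin (y $ 3)" "sph y $ 3 = y $ 1 * cos (y $ 2)"
  unfolding sph_def by simp_all

lemma srad_sq: "(srad p)\<^sup>2 = (p $ 1)\<^sup>2 + (p $ 2)\<^sup>2 + (p $ 3)\<^sup>2"
  unfolding srad_def by simp

lemma schw_metric_sym: "schw_metric m p $ a $ b = schw_metric m p $ b $ a"
  unfolding schw_metric_def by (auto simp: mult.commute)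

lemma schw_metric_00: "schw_metric m p $ 0 $ 0 = - (1 - 2 * m / srad p)"
  unfolding schw_metric_def by simp

lemma schw_metric_00_neg: "srad p > 2 * m \<Longrightarrow> m > 0 \<Longrightarrow> schw_metric m p $ 0 $ 0 < 0"
  unfolding schw_metric_00 by (simp add: field_simps)

lemma schw_metric_time_space: "a \<noteq> 0 \<Longrightarrow> schw_metric m p $ a $ 0 = 0"
  unfolding schw_metric_def by simp

text \<open>The spatial block is \<open>I + u x x\<^sup>T\<close> with \<open>u = 2m/((r - 2m) r\<^sup>2)\<close>; its inverse is
  \<open>I - v x x\<^sup>T\<close> with \<open>v = 2m/r\<^sup>3\<close> (Sherman--Morrison, using \<open>|x|\<^sup>2 = r\<^sup>2\<close>).\<close>
definition schw_metric_inverse :: "real \<Rightarrow> real^4 \<Rightarrow> real^4^4" where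
  "schw_metric_inverse m p = (\<chi> a b.
     if a = 0 \<and> b = 0 then - 1 / (1 - 2 * m / srad p)
     else if a = 0 \<or> b = 0 then 0
     else (if a = b then 1 else 0) - 2 * m / srad p * (p $ a * p $ b) / (srad p)\<^sup>2)"

lemma schw_metric_inverse_mult:
  assumes "srad p > 2 * m" "m > 0"
  shows "schw_metric m p ** schw_metric_inverse m p = mat 1"
    and "schw_metric_inverse m p ** schw_metric m p = mat 1"
proof -
  define r where "r = srad p"
  have r_ne: "r - 2 * m \<noteq> 0" "r \<noteq> 0"
    using assms by (auto simp: r_def)
  define u where "u = 2 * m / (r - 2 * m) / r\<^sup>2"
  define v where "v = 2 * m / r / r\<^sup>2"
  define N where "N = 1 - 2 * m / r"
  have "N = (r - 2 * m) / r"
    unfolding N_def using r_ne by (simp add: field_simps)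
  then have N_ne: "N \<noteq> 0"
    using r_ne by simp
  have sherman_morrison: "u - v = u * v * ((p $ 1)\<^sup>2 + (p $ 2)\<^sup>2 + (p $ 3)\<^sup>2)"
    unfolding u_def v_def srad_sq[symmetric] r_def[symmetric]
    using r_ne by (simp add: field_simps power2_eq_square)
  have g: "schw_metric m p = (\<chi> a b. if a = 0 \<and> b = 0 then - N
     else if a = 0 \<or> b = 0 then 0 else (if a = b then 1 else 0) + u * (p $ a * p $ b))"
    unfolding schw_metric_def u_def N_def r_def by (simp add: vec_eq_iff)
  have g_inv: "schw_metric_inverse m p = (\<chi> a b. if a = 0 \<and> b = 0 then - 1 / N
     else if a = 0 \<or> b = 0 then 0 else (if a = b then 1 else 0) - v * (p $ a * p $ b))"
    unfolding schw_metric_inverse_def v_def N_def r_def by (simp add: vec_eq_iff)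
  show "schw_metric m p ** schw_metric_inverse m p = mat 1"
    "schw_metric_inverse m p ** schw_metric m p = mat 1"
    unfolding matrix_matrix_mult_def mat_def g g_inv
    apply (simp_all add: vec_eq_iff sum_UNIV_4 all_4 N_ne)
    apply (intro conjI; use sherman_morrison in algebra)+
    done
qed

lemma matrix_inv_schw_metric:
  assumes "srad p > 2 * m" "m > 0"
  shows "matrix_inv (schw_metric m p) = schw_metric_inverse m p"
  unfolding matrix_inv_def
proof (rule some_equality)
  fix A assume A: "schw_metric m p ** A = mat 1 \<and> A ** schw_metric m p = mat 1"
  have "A = A ** (schw_metric m p ** schw_metric_inverse m p)"
    using schw_metric_inverse_mult(1)[OF assms] by simp
  then have "A = (A ** schw_metric m p) ** schw_metric_inverse m p"
    by (simp add: matrix_mul_assoc)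
  then show "A = schw_metric_inverse m p"
    using A by simp
qed (use schw_metric_inverse_mult[OF assms] in blast)

lemma christoffel_lowered:
  assumes "srad p > 2 * m" "m > 0"
  shows "(\<Sum>a\<in>UNIV. schw_metric m p $ d $ a * christoffel m p a b c) =
     1/2 * (pdiff (\<lambda>x. schw_metric m x $ d $ c) b p + pdiff (\<lambda>x. schw_metric m x $ d $ b) c p
            - pdiff (\<lambda>x. schw_metric m x $ b $ c) d p)"
proof -
  let ?g = "schw_metric m p" and ?h = "schw_metric_inverse m p"
  define T where "T e = pdiff (\<lambda>x. schw_metric m x $ e $ c) b p
    + pdiff (\<lambda>x. schw_metric m x $ e $ b) c p - pdiff (\<lambda>x. schw_metric m x $ b $ c) e p" for e
  have delta: "(\<Sum>a\<in>UNIV. ?g $ d $ a * ?h $ a $ e) = (if d = e then 1 else 0)" for e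
    using schw_metric_inverse_mult(1)[OF assms]
    by (simp add: vec_eq_iff matrix_matrix_mult_def mat_def)
  have "(\<Sum>a\<in>UNIV. ?g $ d $ a * christoffel m p a b c)
      = (\<Sum>a\<in>UNIV. \<Sum>e\<in>UNIV. 1/2 * (?g $ d $ a * ?h $ a $ e * T e))"
    unfolding christoffel_def matrix_inv_schw_metric[OF assms] T_def
    by (simp add: sum_distrib_left mult.assoc)
  also have "\<dots> = (\<Sum>e\<in>UNIV. 1/2 * ((\<Sum>a\<in>UNIV. ?g $ d $ a * ?h $ a $ e) * T e))"
    by (subst sum.swap) (simp add: sum_distrib_left sum_distrib_right mult.assoc)
  also have "\<dots> = (\<Sum>e\<in>UNIV. if d = e then 1/2 * T e else 0)"
    unfolding delta by (intro sum.cong) auto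
  also have "\<dots> = 1/2 * T d"
    by simp
  finally show ?thesis
    unfolding T_def .
qed

lemma has_real_derivative_vec_nth:
  assumes "(V has_vector_derivative D) F"
  shows "((\<lambda>s. V s $ a) has_real_derivative D $ a) F"
proof -
  have "(V has_derivative (\<lambda>t. t *\<^sub>R D)) F"
    using assms by (simp add: has_vector_derivative_def)
  from bounded_linear.has_derivative[OF bounded_linear_vec_nth this]
  show ?thesis
    by (rule has_derivative_imp_has_field_derivative) simp
qed

lemma differentiable_vec_nth [simp]: "(\<lambda>x. x $ i) differentiable F"
  using bounded_linear_imp_differentiable[OF bounded_linear_vec_nth] .

lemma srad_differentiable:
  assumes "srad p > 0"
  shows "srad differentiable (at p)"
proof -
  have pos: "(p $ 1)\<^sup>2 + (p $ 2)\<^sup>2 + (p $ 3)\<^sup>2 > 0"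
    using assms unfolding srad_def by simp
  have "(\<lambda>x::real^4. (x $ 1)\<^sup>2 + (x $ 2)\<^sup>2 + (x $ 3)\<^sup>2) differentiable (at p)"
    by simp
  then obtain D where "((\<lambda>x::real^4. (x $ 1)\<^sup>2 + (x $ 2)\<^sup>2 + (x $ 3)\<^sup>2) has_derivative D) (at p)"
    unfolding differentiable_def by blast
  from has_derivative_real_sqrt[OF pos this] show ?thesis
    unfolding srad_def differentiable_def by blast
qed

lemma schw_metric_differentiable:
  assumes "srad p > 2 * m" "m > 0"
  shows "(\<lambda>x. schw_metric m x $ a $ b) differentiable (at p)"
proof -
  have "srad differentiable (at p)" "srad p \<noteq> 0" "srad p - 2 * m \<noteq> 0"
    using assms srad_differentiable[of p] by auto
  moreover have "(\<lambda>x. schw_metric m x $ a $ b) =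
     (if a = 0 \<and> b = 0 then (\<lambda>x. - (1 - 2 * m / srad x))
      else if a = 0 \<or> b = 0 then (\<lambda>x. 0)
      else (\<lambda>x. (if a = b then 1 else 0) + 2 * m / (srad x - 2 * m) * (x $ a * x $ b) / (srad x)\<^sup>2))"
    unfolding schw_metric_def by auto
  ultimately show ?thesis
    by auto
qed

lemma pdiff_eq_frechet_derivative:
  assumes "f differentiable (at p)"
  shows "pdiff f b p = frechet_derivative f (at p) (axis b 1)"
proof -
  let ?D = "frechet_derivative f (at p)"
  have fD: "(f has_derivative ?D) (at p)"
    using assms frechet_derivative_works by blast
  then have lin: "linear ?D"
    by (rule has_derivative_linear)
  have line: "((\<lambda>s::real. p + s *\<^sub>R axis b 1) has_derivative (\<lambda>s. s *\<^sub>R axis b 1)) (at 0)"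
    by (auto intro!: derivative_eq_intros)
  have "(f has_derivative ?D) (at ((\<lambda>s::real. p + s *\<^sub>R axis b 1) 0))"
    using fD by simp
  from has_derivative_compose[OF line this]
  have "((\<lambda>s. f (p + s *\<^sub>R axis b 1)) has_derivative (\<lambda>s. ?D (s *\<^sub>R axis b 1))) (at 0)"
    by (simp add: o_def)
  then have "((\<lambda>s. f (p + s *\<^sub>R axis b 1)) has_real_derivative ?D (axis b 1)) (at 0)"
    by (rule has_derivative_imp_has_field_derivative) (simp add: linear_scale[OF lin] mult.commute)
  then show ?thesis
    unfolding pdiff_def by (rule DERIV_imp_deriv)
qed

lemma pdiff_chain_rule:
  assumes "f differentiable (at (\<psi> s))" "(\<psi> has_vector_derivative d) (at s within S)"
  shows "((\<lambda>s. f (\<psi> s)) has_real_derivative (\<Sum>c\<in>UNIV. pdiff f c (\<psi> s) * d $ c)) (at s within S)"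
proof -
  let ?D = "frechet_derivative f (at (\<psi> s))"
  have fD: "(f has_derivative ?D) (at (\<psi> s))"
    using assms frechet_derivative_works by blast
  then have lin: "linear ?D"
    by (rule has_derivative_linear)
  have "(\<psi> has_derivative (\<lambda>t. t *\<^sub>R d)) (at s within S)"
    using assms(2) by (simp add: has_vector_derivative_def)
  from has_derivative_compose[OF this fD]
  have "((\<lambda>s. f (\<psi> s)) has_derivative (\<lambda>t. ?D (t *\<^sub>R d))) (at s within S)"
    by (simp add: o_def)
  moreover have "?D d = (\<Sum>c\<in>UNIV. pdiff f c (\<psi> s) * d $ c)"
  proof -
    have "?D d = ?D (\<Sum>c\<in>UNIV. d $ c *\<^sub>R axis c 1)"
      using basis_expansion[of d] by (simp add: scalar_mult_eq_scaleR)
    also have "\<dots> = (\<Sum>c\<in>UNIV. d $ c * ?D (axis c 1))"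
      using lin by (simp add: linear_sum linear_scale)
    finally show ?thesis
      using pdiff_eq_frechet_derivative[OF assms(1)] by (simp add: mult.commute)
  qed
  ultimately show ?thesis
    by (intro has_derivative_imp_has_field_derivative) (auto simp: linear_scale[OF lin] mult.commute)
qed

lemma zero_derivative_unit_interval:
  fixes f :: "real \<Rightarrow> real"
  assumes "\<And>s. s \<in> {0..1} \<Longrightarrow> (f has_real_derivative 0) (at s within {0..1})"
    and "s \<in> {0..1}"
  shows "f s = f 0"
proof -
  obtain c where "\<forall>x\<in>{0..1}. f x = c"
    using has_field_derivative_zero_constant[of "{0..1::real}" f] assms(1) by auto
  then show ?thesis
    using assms(2) by simp
qed

lemma parallel_along_derivative:
  assumes "parallel_along m \<psi> V"
    and "\<forall>s\<in>{0..1}. (\<psi> has_vector_derivative X s) (at s within {0..1})"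
  obtains V' where "\<forall>s\<in>{0..1}. (V has_vector_derivative V' s) (at s within {0..1})"
    and "\<forall>s\<in>{0..1}. \<forall>a. V' s $ a =
           - (\<Sum>b\<in>UNIV. \<Sum>c\<in>UNIV. christoffel m (\<psi> s) a b c * X s $ b * V s $ c)"
proof -
  obtain V' where V': "\<forall>s\<in>{0..1}. (V has_vector_derivative V' s) (at s within {0..1}) \<and>
        (\<forall>a. V' s $ a + (\<Sum>b\<in>UNIV. \<Sum>c\<in>UNIV. christoffel m (\<psi> s) a b c *
              vector_derivative \<psi> (at s within {0..1}) $ b * V s $ c) = 0)"
    using assms(1) unfolding parallel_along_def by blast
  have "vector_derivative \<psi> (at s within {0..1}) = X s" if "s \<in> {0..1}" for s
    using assms(2) that by (intro vector_derivative_within_closed_interval) auto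
  with V' show ?thesis
    by (intro that[of V']) (auto simp: eq_neg_iff_add_eq_0)
qed

lemma geodesic_segment_tangent:
  assumes "geodesic_segment m \<psi>"
  obtains X where "\<forall>s\<in>{0..1}. (\<psi> has_vector_derivative X s) (at s within {0..1})"
    and "parallel_along m \<psi> X"
    and "\<forall>s\<in>{0..1}. srad (\<psi> s) > 2 * m"
proof -
  obtain X X' where X: "\<forall>s\<in>{0..1}. (\<psi> has_vector_derivative X s) (at s within {0..1}) \<and>
        (X has_vector_derivative X' s) (at s within {0..1}) \<and>
        (\<forall>a. X' s $ a + (\<Sum>b\<in>UNIV. \<Sum>c\<in>UNIV. christoffel m (\<psi> s) a b c * X s $ b * X s $ c) = 0)"
    and "\<forall>s\<in>{0..1}. \<psi> s \<in> schw_exterior m"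
    using assms unfolding geodesic_segment_def by blast
  moreover have "vector_derivative \<psi> (at s within {0..1}) = X s" if "s \<in> {0..1}" for s
    using X that by (intro vector_derivative_within_closed_interval) auto
  ultimately show ?thesis
    by (intro that[of X]) (auto simp: parallel_along_def schw_exterior_def intro!: exI[of _ X'])
qed

lemma levi_civita_quadratic_derivative:
  fixes g :: "'n::finite \<Rightarrow> 'n \<Rightarrow> real" and dg Gam :: "'n \<Rightarrow> 'n \<Rightarrow> 'n \<Rightarrow> real"
    and X V W :: "'n \<Rightarrow> real"
  assumes sym: "\<And>a b. g a b = g b a"
    and dsym: "\<And>c a b. dg c a b = dg c b a"
    and lowered: "\<And>d b c. (\<Sum>a\<in>UNIV. g d a * Gam a b c) = 1/2 * (dg b d c + dg c d b - dg d b c)"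
    and W: "\<And>a. W a = - (\<Sum>b\<in>UNIV. \<Sum>c\<in>UNIV. Gam a b c * X b * V c)"
  shows "(\<Sum>a\<in>UNIV. \<Sum>b\<in>UNIV. W a * g a b * V b + V a * (\<Sum>c\<in>UNIV. dg c a b * X c) * V b
            + V a * g a b * W b) = 0"
proof -
  define F where "F b e c = dg e b c * X e * V c * V b" for b e c
  define G where "G b e c = dg c b e * X e * V c * V b" for b e c
  define H where "H b e c = dg b e c * X e * V c * V b" for b e c
  have gW: "(\<Sum>a\<in>UNIV. g b a * W a) =
      - 1/2 * (\<Sum>e\<in>UNIV. \<Sum>c\<in>UNIV. (dg e b c + dg c b e - dg b e c) * X e * V c)" for b
  proof -
    have "(\<Sum>a\<in>UNIV. g b a * W a)
        = - (\<Sum>a\<in>UNIV. \<Sum>e\<in>UNIV. \<Sum>c\<in>UNIV. g b a * Gam a e c * X e * V c)"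
      unfolding W by (simp add: sum_distrib_left sum_negf mult.assoc)
    also have "\<dots> = - (\<Sum>e\<in>UNIV. \<Sum>c\<in>UNIV. \<Sum>a\<in>UNIV. g b a * Gam a e c * X e * V c)"
      by (subst sum.swap) (rule arg_cong[where f = uminus], rule sum.cong[OF refl], rule sum.swap)
    also have "\<dots> = - (\<Sum>e\<in>UNIV. \<Sum>c\<in>UNIV. (\<Sum>a\<in>UNIV. g b a * Gam a e c) * X e * V c)"
      by (simp add: sum_distrib_right)
    finally show ?thesis
      unfolding lowered by (simp add: sum_distrib_left mult.assoc sum_negf)
  qed
  have "(\<Sum>a\<in>UNIV. \<Sum>b\<in>UNIV. W a * g a b * V b) = (\<Sum>b\<in>UNIV. V b * (\<Sum>a\<in>UNIV. g b a * W a))"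
    by (subst sum.swap) (simp add: sum_distrib_left sym mult.commute mult.left_commute)
  also have "\<dots> = - 1/2 * (\<Sum>b\<in>UNIV. \<Sum>e\<in>UNIV. \<Sum>c\<in>UNIV. F b e c + G b e c - H b e c)"
    unfolding gW F_def G_def H_def by (simp add: sum_distrib_left algebra_simps sum_negf)
  finally have S1: "(\<Sum>a\<in>UNIV. \<Sum>b\<in>UNIV. W a * g a b * V b) =
      - 1/2 * (\<Sum>b\<in>UNIV. \<Sum>e\<in>UNIV. \<Sum>c\<in>UNIV. F b e c + G b e c - H b e c)" .
  have S3: "(\<Sum>a\<in>UNIV. \<Sum>b\<in>UNIV. V a * g a b * W b) = (\<Sum>a\<in>UNIV. \<Sum>b\<in>UNIV. W a * g a b * V b)"
    by (subst sum.swap) (simp add: sym mult.commute mult.left_commute)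
  have S2: "(\<Sum>a\<in>UNIV. \<Sum>b\<in>UNIV. V a * (\<Sum>c\<in>UNIV. dg c a b * X c) * V b) =
      (\<Sum>b\<in>UNIV. \<Sum>e\<in>UNIV. \<Sum>c\<in>UNIV. F b e c)"
  proof -
    have "(\<Sum>a\<in>UNIV. \<Sum>b\<in>UNIV. V a * (\<Sum>c\<in>UNIV. dg c a b * X c) * V b) =
        (\<Sum>a\<in>UNIV. \<Sum>b\<in>UNIV. \<Sum>c\<in>UNIV. dg c a b * X c * V b * V a)"
      by (simp add: sum_distrib_left sum_distrib_right mult.commute mult.left_commute)
    also have "\<dots> = (\<Sum>a\<in>UNIV. \<Sum>c\<in>UNIV. \<Sum>b\<in>UNIV. dg c a b * X c * V b * V a)"
      by (rule sum.cong[OF refl], rule sum.swap)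
    finally show ?thesis
      unfolding F_def by simp
  qed
  have GH: "(\<Sum>b\<in>UNIV. \<Sum>e\<in>UNIV. \<Sum>c\<in>UNIV. G b e c) = (\<Sum>b\<in>UNIV. \<Sum>e\<in>UNIV. \<Sum>c\<in>UNIV. H b e c)"
  proof -
    have "(\<Sum>b\<in>UNIV. \<Sum>e\<in>UNIV. \<Sum>c\<in>UNIV. H b e c) = (\<Sum>c\<in>UNIV. \<Sum>b\<in>UNIV. \<Sum>e\<in>UNIV. H b e c)"
      by (subst sum.swap) (rule sum.cong[OF refl], rule sum.swap)
    also have "\<dots> = (\<Sum>c\<in>UNIV. \<Sum>b\<in>UNIV. \<Sum>e\<in>UNIV. G c e b)"
      unfolding H_def G_def by (simp add: dsym mult.commute mult.left_commute)
    also have "\<dots> = (\<Sum>b\<in>UNIV. \<Sum>e\<in>UNIV. \<Sum>c\<in>UNIV. G b e c)"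
      by (rule sum.cong[OF refl], rule sum.swap)
    finally show ?thesis
      by simp
  qed
  show ?thesis
    using S1 S2 S3 GH by (simp add: sum.distrib sum_subtractf)
qed

lemma sg_expand: "sg m p v w = (\<Sum>a\<in>UNIV. \<Sum>b\<in>UNIV. v $ a * schw_metric m p $ a $ b * w $ b)"
  unfolding sg_def inner_vec_def matrix_vector_mult_def
  by (simp add: sum_distrib_left mult.assoc)

lemma sg_parallel_transport:
  assumes m: "m > 0" and ext: "\<forall>s\<in>{0..1}. srad (\<psi> s) > 2 * m"
    and X: "\<forall>s\<in>{0..1}. (\<psi> has_vector_derivative X s) (at s within {0..1})"
    and "parallel_along m \<psi> V"
  shows "sg m (\<psi> 0) (V 0) (V 0) = sg m (\<psi> 1) (V 1) (V 1)"
proof -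
  obtain V' where V': "\<forall>s\<in>{0..1}. (V has_vector_derivative V' s) (at s within {0..1})"
    and transport: "\<forall>s\<in>{0..1}. \<forall>a. V' s $ a =
           - (\<Sum>b\<in>UNIV. \<Sum>c\<in>UNIV. christoffel m (\<psi> s) a b c * X s $ b * V s $ c)"
    using parallel_along_derivative[OF assms(4) X] .
  let ?Q = "\<lambda>s. \<Sum>a\<in>UNIV. \<Sum>b\<in>UNIV. V s $ a * schw_metric m (\<psi> s) $ a $ b * V s $ b"
  have "(?Q has_real_derivative 0) (at s within {0..1})" if s: "s \<in> {0..1}" for s
  proof -
    let ?dg = "\<lambda>c a b. pdiff (\<lambda>x. schw_metric m x $ a $ b) c (\<psi> s)"
    have V'_a: "((\<lambda>s. V s $ a) has_real_derivative V' s $ a) (at s within {0..1})" for a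
      using has_real_derivative_vec_nth V' s by blast
    have g_ab: "((\<lambda>s. schw_metric m (\<psi> s) $ a $ b) has_real_derivative
        (\<Sum>c\<in>UNIV. ?dg c a b * X s $ c)) (at s within {0..1})" for a b
      using pdiff_chain_rule[OF schw_metric_differentiable[OF _ m]] X ext s by auto
    have "(?Q has_real_derivative (\<Sum>a\<in>UNIV. \<Sum>b\<in>UNIV.
       V' s $ a * schw_metric m (\<psi> s) $ a $ b * V s $ b +
       V s $ a * (\<Sum>c\<in>UNIV. ?dg c a b * X s $ c) * V s $ b +
       V s $ a * schw_metric m (\<psi> s) $ a $ b * V' s $ b)) (at s within {0..1})"
      by (intro DERIV_sum DERIV_cong[OF DERIV_mult[OF DERIV_mult[OF V'_a g_ab] V'_a]])
        (simp add: algebra_simps)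
    also have "(\<Sum>a\<in>UNIV. \<Sum>b\<in>UNIV.
       V' s $ a * schw_metric m (\<psi> s) $ a $ b * V s $ b +
       V s $ a * (\<Sum>c\<in>UNIV. ?dg c a b * X s $ c) * V s $ b +
       V s $ a * schw_metric m (\<psi> s) $ a $ b * V' s $ b) = 0"
      using ext s m transport
      by (intro levi_civita_quadratic_derivative[where Gam = "christoffel m (\<psi> s)"])
        (auto simp: schw_metric_sym christoffel_lowered)
    finally show ?thesis .
  qed
  then have "?Q 1 = ?Q 0"
    using zero_derivative_unit_interval[of ?Q 1] by simp
  then show ?thesis
    unfolding sg_expand by simp
qed

lemma schw_metric_time_translation: "schw_metric m (p + s *\<^sub>R axis 0 1) = schw_metric m p"
proof -
  have "srad (p + s *\<^sub>R axis 0 1) = srad p"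
    unfolding srad_def by (simp add: axis_def)
  then show ?thesis
    unfolding schw_metric_def by (simp add: vec_eq_iff axis_def)
qed

lemma pdiff_time_schw_metric: "pdiff (\<lambda>x. schw_metric m x $ a $ b) 0 p = 0"
  unfolding pdiff_def schw_metric_time_translation by simp

lemma pdiff_schw_metric_time_space: "c \<noteq> 0 \<Longrightarrow> pdiff (\<lambda>x. schw_metric m x $ 0 $ c) b p = 0"
  unfolding pdiff_def schw_metric_def by simp

definition gtt_derivative :: "real \<Rightarrow> real^4 \<Rightarrow> real^4 \<Rightarrow> real" where
  "gtt_derivative m p Y = (\<Sum>c\<in>UNIV. pdiff (\<lambda>x. schw_metric m x $ 0 $ 0) c p * Y $ c)"

lemma christoffel_time_contraction:
  assumes "srad p > 2 * m" "m > 0"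
  shows "2 * schw_metric m p $ 0 $ 0 *
      (\<Sum>b\<in>UNIV. \<Sum>c\<in>UNIV. christoffel m p 0 b c * Y $ b * Z $ c) =
    Y $ 0 * gtt_derivative m p Z + Z $ 0 * gtt_derivative m p Y"
proof -
  let ?g00 = "schw_metric m p $ 0 $ 0" and ?P = "\<lambda>c. pdiff (\<lambda>x. schw_metric m x $ 0 $ 0) c p"
  have g00_ne: "?g00 \<noteq> 0"
    using schw_metric_00_neg[OF assms] by simp
  have inverse_row: "schw_metric_inverse m p $ 0 $ d = (if d = 0 then 1 / ?g00 else 0)" for d
    unfolding schw_metric_inverse_def schw_metric_00 by (simp add: minus_divide_right)
  have "2 * ?g00 * christoffel m p 0 b c =
      (if b = 0 then ?P c else 0) + (if c = 0 then ?P b else 0)" for b c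
    unfolding christoffel_def matrix_inv_schw_metric[OF assms] inverse_row sum_UNIV_4
    using g00_ne by (cases "b = 0"; cases "c = 0")
      (simp_all add: pdiff_time_schw_metric pdiff_schw_metric_time_space)
  then have "2 * ?g00 * (\<Sum>b\<in>UNIV. \<Sum>c\<in>UNIV. christoffel m p 0 b c * Y $ b * Z $ c) =
      (\<Sum>b\<in>UNIV. \<Sum>c\<in>UNIV. ((if b = 0 then ?P c else 0) + (if c = 0 then ?P b else 0)) * Y $ b * Z $ c)"
    by (simp add: sum_distrib_left mult.assoc[symmetric])
  also have "\<dots> = Y $ 0 * gtt_derivative m p Z + Z $ 0 * gtt_derivative m p Y"
    unfolding gtt_derivative_def sum_UNIV_4 by (simp add: pdiff_time_schw_metric algebra_simps)
  finally show ?thesis .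
qed

lemma gtt_chain_rule:
  assumes "m > 0" "srad (\<psi> s) > 2 * m"
    and "(\<psi> has_vector_derivative X) (at s within S)"
  shows "((\<lambda>s. schw_metric m (\<psi> s) $ 0 $ 0) has_real_derivative gtt_derivative m (\<psi> s) X)
           (at s within S)"
  unfolding gtt_derivative_def
  using pdiff_chain_rule[OF schw_metric_differentiable[OF assms(2,1)] assms(3)] .

text \<open>Conservation of the Killing energy \<open>g(\<psi>', \<partial>\<^sub>t)\<close> along a geodesic.\<close>
lemma geodesic_time_velocity_vanishes:
  assumes m: "m > 0" and ext: "\<forall>s\<in>{0..1}. srad (\<psi> s) > 2 * m"
    and X: "\<forall>s\<in>{0..1}. (\<psi> has_vector_derivative X s) (at s within {0..1})"
    and "parallel_along m \<psi> X" and "X 0 $ 0 = 0"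
    and s: "s \<in> {0..1}"
  shows "X s $ 0 = 0"
proof -
  obtain X' where X': "\<forall>s\<in>{0..1}. (X has_vector_derivative X' s) (at s within {0..1})"
    and transport: "\<forall>s\<in>{0..1}. \<forall>a. X' s $ a =
           - (\<Sum>b\<in>UNIV. \<Sum>c\<in>UNIV. christoffel m (\<psi> s) a b c * X s $ b * X s $ c)"
    using parallel_along_derivative[OF assms(4) X] .
  let ?G = "\<lambda>s. schw_metric m (\<psi> s) $ 0 $ 0"
  have "((\<lambda>s. X s $ 0 * ?G s) has_real_derivative 0) (at s within {0..1})"
    if s: "s \<in> {0..1}" for s
  proof -
    have "((\<lambda>s. X s $ 0 * ?G s) has_real_derivative
        X' s $ 0 * ?G s + gtt_derivative m (\<psi> s) (X s) * X s $ 0) (at s within {0..1})"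
      using X X' s by (intro DERIV_mult has_real_derivative_vec_nth gtt_chain_rule m) (auto simp: ext)
    moreover have "X' s $ 0 * ?G s + gtt_derivative m (\<psi> s) (X s) * X s $ 0 = 0"
      using christoffel_time_contraction[of m "\<psi> s" "X s" "X s"] transport m ext s
      by (simp add: algebra_simps)
    ultimately show ?thesis
      by simp
  qed
  then have "X s $ 0 * ?G s = 0"
    using zero_derivative_unit_interval[of "\<lambda>s. X s $ 0 * ?G s" s] s \<open>X 0 $ 0 = 0\<close> by simp
  moreover have "?G s \<noteq> 0"
    using schw_metric_00_neg[of m "\<psi> s"] m ext s by simp
  ultimately show ?thesis
    by simp
qed

text \<open>The invariant is \<open>g(V, \<partial>\<^sub>t)\<^sup>2 / g(\<partial>\<^sub>t, \<partial>\<^sub>t)\<close>: when \<open>\<psi>\<close> has no \<open>t\<close>-velocity,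
  \<open>\<nabla>\<^bsub>\<psi>'\<^esub> \<partial>\<^sub>t\<close> is a multiple of \<open>\<partial>\<^sub>t\<close>.\<close>
lemma parallel_time_component_invariant:
  assumes m: "m > 0" and ext: "\<forall>s\<in>{0..1}. srad (\<psi> s) > 2 * m"
    and X: "\<forall>s\<in>{0..1}. (\<psi> has_vector_derivative X s) (at s within {0..1})"
    and X_space: "\<forall>s\<in>{0..1}. X s $ 0 = 0"
    and "parallel_along m \<psi> V"
  shows "(V 0 $ 0)\<^sup>2 * schw_metric m (\<psi> 0) $ 0 $ 0 = (V 1 $ 0)\<^sup>2 * schw_metric m (\<psi> 1) $ 0 $ 0"
proof -
  obtain V' where V': "\<forall>s\<in>{0..1}. (V has_vector_derivative V' s) (at s within {0..1})"
    and transport: "\<forall>s\<in>{0..1}. \<forall>a. V' s $ a =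
           - (\<Sum>b\<in>UNIV. \<Sum>c\<in>UNIV. christoffel m (\<psi> s) a b c * X s $ b * V s $ c)"
    using parallel_along_derivative[OF assms(5) X] .
  let ?G = "\<lambda>s. schw_metric m (\<psi> s) $ 0 $ 0"
  have "((\<lambda>s. (V s $ 0)\<^sup>2 * ?G s) has_real_derivative 0) (at s within {0..1})"
    if s: "s \<in> {0..1}" for s
  proof -
    have "((\<lambda>s. (V s $ 0)\<^sup>2 * ?G s) has_real_derivative
        2 * V s $ 0 * V' s $ 0 * ?G s + gtt_derivative m (\<psi> s) (X s) * (V s $ 0)\<^sup>2)
        (at s within {0..1})"
      using V' X s
      by (intro DERIV_mult gtt_chain_rule m DERIV_cong[OF DERIV_power[OF has_real_derivative_vec_nth]])
        (auto simp: ext)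
    moreover have "2 * V s $ 0 * V' s $ 0 * ?G s + gtt_derivative m (\<psi> s) (X s) * (V s $ 0)\<^sup>2 = 0"
      using christoffel_time_contraction[of m "\<psi> s" "X s" "V s"] transport X_space m ext s
      by (simp add: algebra_simps power2_eq_square)
    ultimately show ?thesis
      by simp
  qed
  then show ?thesis
    using zero_derivative_unit_interval[of "\<lambda>s. (V s $ 0)\<^sup>2 * ?G s" 1] by simp
qed

lemma srad_sph:
  assumes "r > 0"
  shows "srad (sph (vec4 t r th ph)) = r"
proof -
  have "(r * sin th * cos ph)\<^sup>2 + (r * sin th * sin ph)\<^sup>2 + (r * cos th)\<^sup>2 = r\<^sup>2"
    using sin_cos_squared_add[of th] sin_cos_squared_add[of ph] by algebra
  then show ?thesis
    unfolding srad_def using assms by simp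
qed

lemma sph_push_time:
  "sph_push (vec4 t r th ph) (vec4 c 0 0 0) = vec4 c 0 0 0"
proof -
  have "(\<lambda>s. sph (vec4 t r th ph + s *\<^sub>R vec4 c 0 0 0)) = (\<lambda>s. sph (vec4 t r th ph) + s *\<^sub>R vec4 c 0 0 0)"
    by (intro ext) (simp add: vec_eq_iff all_4)
  moreover have "((\<lambda>s. sph (vec4 t r th ph) + s *\<^sub>R vec4 c 0 0 0) has_vector_derivative vec4 c 0 0 0) (at 0)"
    by (auto intro!: derivative_eq_intros)
  ultimately show ?thesis
    unfolding sph_push_def by (simp add: vector_derivative_at)
qed

lemma sph_push_equatorial:
  "sph_push (vec4 t r (pi/2) ph) (vec4 a 0 0 b) = vec4 a (- r * sin ph * b) (r * cos ph * b) 0"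
proof -
  let ?f = "\<lambda>s. (t + s * a) *\<^sub>R axis 0 1 + (r * cos (ph + s * b)) *\<^sub>R axis 1 1
      + (r * sin (ph + s * b)) *\<^sub>R (axis 2 1 :: real^4)"
  have "(\<lambda>s. sph (vec4 t r (pi/2) ph + s *\<^sub>R vec4 a 0 0 b)) = ?f"
    by (intro ext) (simp add: vec_eq_iff all_4 axis_def)
  moreover have "(?f has_vector_derivative (a *\<^sub>R axis 0 1 + (- r * sin ph * b) *\<^sub>R axis 1 1
      + (r * cos ph * b) *\<^sub>R (axis 2 1 :: real^4))) (at 0)"
    by (auto intro!: derivative_eq_intros simp: algebra_simps)
  moreover have "a *\<^sub>R axis 0 1 + (- r * sin ph * b) *\<^sub>R axis 1 1
      + (r * cos ph * b) *\<^sub>R (axis 2 1 :: real^4) = vec4 a (- r * sin ph * b) (r * cos ph * b) 0"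
    by (simp add: vec_eq_iff all_4 axis_def)
  ultimately show ?thesis
    unfolding sph_push_def by (simp add: vector_derivative_at)
qed

lemma sg_sym: "sg m p x y = sg m p y x"
  unfolding sg_expand by (subst sum.swap) (simp add: schw_metric_sym mult.commute mult.left_commute)

lemma sg_time_vector: "sg m p x (vec4 c 0 0 0) = x $ 0 * schw_metric m p $ 0 $ 0 * c"
  unfolding sg_expand sum_UNIV_4 by (simp add: schw_metric_time_space)

lemma sg_equatorial:
  assumes "srad p = r" "p $ 3 = 0" "v $ 3 = 0" "p $ 1 * v $ 1 + p $ 2 * v $ 2 = 0"
  shows "sg m p v v = - (1 - 2 * m / r) * (v $ 0)\<^sup>2 + (v $ 1)\<^sup>2 + (v $ 2)\<^sup>2"
proof -
  let ?k = "2 * m / (srad p - 2 * m) / (srad p)\<^sup>2"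
  have "sg m p v v = - (1 - 2 * m / r) * (v $ 0)\<^sup>2 + (v $ 1)\<^sup>2 + (v $ 2)\<^sup>2
      + ?k * (p $ 1 * v $ 1 + p $ 2 * v $ 2)\<^sup>2"
    unfolding sg_expand sum_UNIV_4 schw_metric_def using assms(1-3)
    by (simp add: algebra_simps power2_eq_square)
  then show ?thesis
    using assms(4) by simp
qed

lemma sg_diff_diff:
  "sg m p (a *\<^sub>R w - u) (a *\<^sub>R w - u) = a\<^sup>2 * sg m p w w - 2 * a * sg m p w u + sg m p u u"
proof -
  have "sg m p (a *\<^sub>R w - u) (a *\<^sub>R w - u) = a\<^sup>2 * sg m p w w - a * sg m p w u - a * sg m p u w + sg m p u u"
    unfolding sg_expand sum_UNIV_4 by (simp add: algebra_simps power2_eq_square)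
  then show ?thesis
    using sg_sym[of m p u w] by simp
qed

lemma sg_vkin:
  assumes "sg m p u u = -1" "sg m p w w = -1" "sg m p w u = - \<gamma>" "\<gamma> \<noteq> 0"
  shows "sg m p (vkin m p u w) (vkin m p u w) = 1 - 1 / \<gamma>\<^sup>2"
  unfolding vkin_def sg_diff_diff using assms by (simp add: field_simps power2_eq_square)

lemma sg_obs_vel:
  assumes "m > 0" "r0 > 2 * m" "srad p = r0"
  shows "sg m p w (obs_vel m t0 r0 th0 ph0) = - (w $ 0 * sqrt (1 - 2 * m / r0))"
    and "sg m p (obs_vel m t0 r0 th0 ph0) (obs_vel m t0 r0 th0 ph0) = -1"
proof -
  define N where "N = 1 - 2 * m / r0"
  have "N > 0"
    unfolding N_def using assms by (simp add: field_simps)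
  have U: "obs_vel m t0 r0 th0 ph0 = vec4 (1 / sqrt N) 0 0 0"
    unfolding obs_vel_def N_def by (rule sph_push_time)
  have g00: "schw_metric m p $ 0 $ 0 = - N"
    unfolding schw_metric_00 assms(3) N_def ..
  show "sg m p w (obs_vel m t0 r0 th0 ph0) = - (w $ 0 * sqrt (1 - 2 * m / r0))"
    "sg m p (obs_vel m t0 r0 th0 ph0) (obs_vel m t0 r0 th0 ph0) = -1"
    unfolding U sg_time_vector g00 N_def[symmetric] using \<open>N > 0\<close>
    by (simp_all add: field_simps real_sqrt_mult[symmetric])
qed

lemma orb_ut_energy:
  assumes "m > 0" "r1 > 3 * m"
  shows "(1 - 2 * m / r1) * (orb_ut m r1)\<^sup>2 = (r1 - 2 * m) / (r1 - 3 * m)"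
  unfolding orb_ut_def using assms by (simp add: field_simps)

lemma orb_vel_time: "orb_vel m r1 ph1 t1 $ 0 = orb_ut m r1"
  unfolding orb_vel_def sph_push_equatorial by simp

lemma sg_orb_vel:
  assumes "m > 0" "r1 > 3 * m"
  shows "sg m (orb_event m r1 ph1 t1) (orb_vel m r1 ph1 t1) (orb_vel m r1 ph1 t1) = -1"
proof -
  define ph where "ph = ph1 + orb_uphi m r1 / orb_ut m r1 * t1"
  have event: "orb_event m r1 ph1 t1 = sph (vec4 t1 r1 (pi/2) ph)"
    unfolding orb_event_def ph_def ..
  have vel: "orb_vel m r1 ph1 t1 =
      vec4 (orb_ut m r1) (- r1 * sin ph * orb_uphi m r1) (r1 * cos ph * orb_uphi m r1) 0"
    unfolding orb_vel_def ph_def by (rule sph_push_equatorial)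
  have "r1 > 0"
    using assms by simp
  then have "sg m (orb_event m r1 ph1 t1) (orb_vel m r1 ph1 t1) (orb_vel m r1 ph1 t1)
      = - (1 - 2 * m / r1) * (orb_ut m r1)\<^sup>2 + (r1 * sin ph * orb_uphi m r1)\<^sup>2
        + (r1 * cos ph * orb_uphi m r1)\<^sup>2"
    unfolding event vel by (subst sg_equatorial[where r = r1]) (simp_all add: srad_sph)
  also have "\<dots> = - (1 - 2 * m / r1) * (orb_ut m r1)\<^sup>2 + r1\<^sup>2 * (orb_uphi m r1)\<^sup>2"
    using sin_cos_squared_add[of ph] by algebra
  also have "\<dots> = - ((r1 - 2 * m) / (r1 - 3 * m)) + m / (r1 - 3 * m)"
    unfolding mult_minus_left orb_ut_energy[OF assms] using assms
    by (simp add: orb_uphi_def power_mult_distrib power_divide)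
  also have "\<dots> = - (r1 - 3 * m) / (r1 - 3 * m)"
    by (simp add: diff_divide_distrib)
  also have "\<dots> = -1"
    using assms by (simp only: divide_minus_left) simp
  finally show ?thesis .
qed

theorem mainTheorem4:
  fixes m r1 r0 th0 ph0 t0 ph1 t1 :: real
    and \<psi> V :: "real \<Rightarrow> real^4"
  assumes "m > 0" and "r1 > 3*m"
    and "r0 > 2*m" and "0 < th0" and "th0 < pi"
    and "geodesic_segment m \<psi>"
    and "\<psi> 0 = obs_event t0 r0 th0 ph0"
    and "\<psi> 1 = orb_event m r1 ph1 t1"
    and "sg m (\<psi> 0) (vector_derivative \<psi> (at 0 within {0..1}))
                   (vector_derivative \<psi> (at 0 within {0..1})) > 0"
    and "sg m (\<psi> 0) (vector_derivative \<psi> (at 0 within {0..1})) (obs_vel m t0 r0 th0 ph0) = 0"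
    and "parallel_along m \<psi> V"
    and "V 1 = orb_vel m r1 ph1 t1"
  shows "sg m (\<psi> 0) (vkin m (\<psi> 0) (obs_vel m t0 r0 th0 ph0) (V 0))
                    (vkin m (\<psi> 0) (obs_vel m t0 r0 th0 ph0) (V 0)) = m / (r1 - 2*m)"
proof -
  let ?U = "obs_vel m t0 r0 th0 ph0" and ?N = "1 - 2 * m / r0"
  obtain X where X: "\<forall>s\<in>{0..1}. (\<psi> has_vector_derivative X s) (at s within {0..1})"
    and "parallel_along m \<psi> X" and ext: "\<forall>s\<in>{0..1}. srad (\<psi> s) > 2 * m"
    using geodesic_segment_tangent[OF assms(6)] .
  have r0: "srad (\<psi> 0) = r0"
    unfolding assms(7) obs_event_def using assms(1,3) by (intro srad_sph) simp
  have r1: "srad (\<psi> 1) = r1"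
    unfolding assms(8) orb_event_def using assms(1,2) by (intro srad_sph) simp
  have "?N > 0"
    using assms(1,3) by (simp add: field_simps)
  have "vector_derivative \<psi> (at 0 within {0..1}) = X 0"
    using X by (intro vector_derivative_within_closed_interval) auto
  then have "X 0 $ 0 = 0"
    using assms(3,10) sg_obs_vel(1)[OF assms(1,3) r0] \<open>?N > 0\<close> by simp
  then have "\<forall>s\<in>{0..1}. X s $ 0 = 0"
    using geodesic_time_velocity_vanishes[OF assms(1) ext X \<open>parallel_along m \<psi> X\<close>] by blast
  from parallel_time_component_invariant[OF assms(1) ext X this assms(11)]
  have gamma: "(V 0 $ 0 * sqrt ?N)\<^sup>2 = (r1 - 2 * m) / (r1 - 3 * m)"
    using orb_ut_energy[OF assms(1,2)] \<open>?N > 0\<close>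
    by (simp add: r0 r1 schw_metric_00 assms(12) orb_vel_time power_mult_distrib algebra_simps)
  have "sg m (\<psi> 0) (V 0) (V 0) = -1"
    using sg_parallel_transport[OF assms(1) ext X assms(11)] sg_orb_vel[OF assms(1,2)] assms(8,12)
    by simp
  then have "sg m (\<psi> 0) (vkin m (\<psi> 0) ?U (V 0)) (vkin m (\<psi> 0) ?U (V 0))
      = 1 - 1 / (V 0 $ 0 * sqrt ?N)\<^sup>2"
    using gamma assms(1,2) by (intro sg_vkin sg_obs_vel[OF assms(1,3) r0]) auto
  also have "\<dots> = m / (r1 - 2 * m)"
    unfolding gamma using assms(1,2) by (simp add: field_simps)
  finally show ?thesis .
qed

end
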